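(* Let $\mathcal{D}$ be an $S(2,k,v)$ and $G_1=1$-$\mathrm{BIG}(\mathcal{D})$. If $$\alpha(G_1) > k\left\lfloor \frac{v(v-1)}{k^2v-k^3+k^2-k}\right\rfloor,$$ then $G_1$ is not silver.
   Context: A Steiner $2$-design $S(2,k,v)$ ($2<k<v$) is a pair $(V,\mathcal{B})$ with $|V|=v$ and $\mathcal{B}$ a collection of $k$-subsets of $V$ (blocks) such that every $2$-subset of $V$ lies in exactly one block. The $1$-block intersection graph $1$-$\mathrm{BIG}(\mathcal{D})$ has the blocks as vertices, two blocks adjacent iff they intersect in exactly one element; it is $k(v-k)/(k-1)$-regular with $v(v-1)/(k(k-1))$ vertices. $\alpha(G)$ denotes the independence number; an $\alpha$-set is a maximum independent set. Let $G$ be an $r$-regular graph and $c$ a proper $(r+1)$-coloring of $G$. A vertex $x$ is rainbow with respect to $c$ if every one of the $r+1$ colors appears on $N[x]=N(x)\cup\{x\}$. Given an $\alpha$-set $I$, $c$ is silver with respect to $I$ if every $x\in I$ is rainbow; $G$ is silver if it admits a silver coloring with respect to some $\alpha$-set. *)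

theory Defs
  imports Main
begin

definition steiner_2_design :: "nat \<Rightarrow> nat \<Rightarrow> 'a set \<Rightarrow> 'a set set \<Rightarrow> bool" where
  "steiner_2_design k v V \<B> \<longleftrightarrow>
     finite V \<and> card V = v \<and> 2 < k \<and> k < v \<and>
     (\<forall>b\<in>\<B>. b \<subseteq> V \<and> card b = k) \<and>
     (\<forall>x\<in>V. \<forall>y\<in>V. x \<noteq> y \<longrightarrow> (\<exists>!b. b \<in> \<B> \<and> {x, y} \<subseteq> b))"

text \<open>1-block intersection graph: vertex set = blocks, adjacency = meet in exactly one point.\<close>
definition one_BIG_adj :: "'a set \<Rightarrow> 'a set \<Rightarrow> bool" where
  "one_BIG_adj b b' \<longleftrightarrow> b \<noteq> b' \<and> card (b \<inter> b') = 1"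

definition independent_set :: "'v set \<Rightarrow> ('v \<Rightarrow> 'v \<Rightarrow> bool) \<Rightarrow> 'v set \<Rightarrow> bool" where
  "independent_set Vs E I \<longleftrightarrow> I \<subseteq> Vs \<and> (\<forall>x\<in>I. \<forall>y\<in>I. \<not> E x y)"

definition independence_number :: "'v set \<Rightarrow> ('v \<Rightarrow> 'v \<Rightarrow> bool) \<Rightarrow> nat" where
  "independence_number Vs E = Max {card I | I. independent_set Vs E I}"

definition alpha_set :: "'v set \<Rightarrow> ('v \<Rightarrow> 'v \<Rightarrow> bool) \<Rightarrow> 'v set \<Rightarrow> bool" where
  "alpha_set Vs E I \<longleftrightarrow> independent_set Vs E I \<and> card I = independence_number Vs E"

definition nbhd :: "'v set \<Rightarrow> ('v \<Rightarrow> 'v \<Rightarrow> bool) \<Rightarrow> 'v \<Rightarrow> 'v set" where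
  "nbhd Vs E x = {y \<in> Vs. E x y}"

definition closed_nbhd :: "'v set \<Rightarrow> ('v \<Rightarrow> 'v \<Rightarrow> bool) \<Rightarrow> 'v \<Rightarrow> 'v set" where
  "closed_nbhd Vs E x = insert x (nbhd Vs E x)"

definition regular :: "nat \<Rightarrow> 'v set \<Rightarrow> ('v \<Rightarrow> 'v \<Rightarrow> bool) \<Rightarrow> bool" where
  "regular r Vs E \<longleftrightarrow> (\<forall>x\<in>Vs. card (nbhd Vs E x) = r)"

definition proper_coloring :: "nat \<Rightarrow> 'v set \<Rightarrow> ('v \<Rightarrow> 'v \<Rightarrow> bool) \<Rightarrow> ('v \<Rightarrow> nat) \<Rightarrow> bool" where
  "proper_coloring m Vs E c \<longleftrightarrow>
     (\<forall>x\<in>Vs. c x < m) \<and> (\<forall>x\<in>Vs. \<forall>y\<in>Vs. E x y \<longrightarrow> c x \<noteq> c y)"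

definition rainbow :: "nat \<Rightarrow> 'v set \<Rightarrow> ('v \<Rightarrow> 'v \<Rightarrow> bool) \<Rightarrow> ('v \<Rightarrow> nat) \<Rightarrow> 'v \<Rightarrow> bool" where
  "rainbow m Vs E c x \<longleftrightarrow> {0..<m} \<subseteq> c ` closed_nbhd Vs E x"

definition silver :: "'v set \<Rightarrow> ('v \<Rightarrow> 'v \<Rightarrow> bool) \<Rightarrow> bool" where
  "silver Vs E \<longleftrightarrow> (\<exists>r. regular r Vs E \<and>
     (\<exists>I c. alpha_set Vs E I \<and> proper_coloring (r + 1) Vs E c \<and>
            (\<forall>x\<in>I. rainbow (r + 1) Vs E c x)))"

end

theory Submission
  imports Defs
begin

(* Suppose G is r-regular, c is a proper (r+1)-colouring and every block of an alpha-set I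
   is rainbow.
   (1) Distinct blocks share at most one point, so an independent set of G consists of
       pairwise disjoint blocks, and every block of the closed neighbourhood N[x] meets x.
   (2) Fix a colour class S.  Each x in I meets some block of S (x is rainbow); choosing such
       a common point for every x injects I into the points covered by S, so |I| <= k |S|.
   (3) Pigeonhole: some colour class S has (r+1) |S| <= |B|.
   (4) Counting in the design: |B| k(k-1) = v(v-1) and r(k-1) = k(v-k), hence
       k(k-1)(r+1) = k^2 v - k^3 + k^2 - k.
   Thus |S| <= floor(v(v-1)/(k^2 v - k^3 + k^2 - k)) and alpha(G) = |I| <= k |S|, a
   contradiction. *)

lemma double_counting:
  assumes "finite A" "finite B"
  shows "(\<Sum>a\<in>A. card {b \<in> B. R a b}) = (\<Sum>b\<in>B. card {a \<in> A. R a b})"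
proof -
  have count: "card {x \<in> X. P x} = (\<Sum>x\<in>X. of_bool (P x) :: nat)"
    if "finite X" for X and P :: "'c \<Rightarrow> bool"
    using that by (simp add: Int_def)
  have "(\<Sum>a\<in>A. card {b \<in> B. R a b}) = (\<Sum>a\<in>A. \<Sum>b\<in>B. of_bool (R a b) :: nat)"
    using assms(2) by (simp only: count)
  also have "\<dots> = (\<Sum>b\<in>B. \<Sum>a\<in>A. of_bool (R a b))" by (rule sum.swap)
  also have "\<dots> = (\<Sum>b\<in>B. card {a \<in> A. R a b})"
    using assms(1) by (simp only: count)
  finally show ?thesis .
qed

(* A family of pairwise disjoint sets, each meeting the union of a finite family S of sets
   of size at most k, has at most k |S| members: pick a common point for each member. *)
lemma disjoint_family_meeting_bound:
  assumes S: "finite S" "\<And>s. s \<in> S \<Longrightarrow> finite s \<and> card s \<le> k"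
    and disj: "pairwise disjnt I"
    and meets: "\<And>x. x \<in> I \<Longrightarrow> x \<inter> \<Union>S \<noteq> {}"
  shows "card I \<le> k * card S"
proof -
  have "\<forall>x\<in>I. \<exists>p. p \<in> x \<inter> \<Union>S" using meets by blast
  then obtain g where g: "\<And>x. x \<in> I \<Longrightarrow> g x \<in> x \<inter> \<Union>S" by metis
  have "inj_on g I"
  proof (rule inj_onI)
    fix x y assume "x \<in> I" "y \<in> I" "g x = g y"
    with g have "\<not> disjnt x y" by (metis IntD1 disjnt_iff)
    with disj \<open>x \<in> I\<close> \<open>y \<in> I\<close> show "x = y" by (meson pairwiseD)
  qed
  then have "card I = card (g ` I)" by (simp add: card_image)
  also have "\<dots> \<le> card (\<Union>S)"
    using S g by (intro card_mono) auto
  also have "\<dots> \<le> (\<Sum>s\<in>S. card s)" by (rule card_Union_le_sum_card)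
  also have "\<dots> \<le> k * card S"
    using S sum_bounded_above[of S card k] by (simp add: mult.commute)
  finally show ?thesis .
qed

lemma small_colour_class:
  fixes c :: "'v \<Rightarrow> nat"
  assumes fin: "finite X" and colours: "\<forall>x\<in>X. c x < m" and m: "0 < m"
  obtains j where "j < m" "m * card {x \<in> X. c x = j} \<le> card X"
proof -
  have "\<exists>j<m. m * card {x \<in> X. c x = j} \<le> card X"
  proof (rule ccontr)
    assume "\<not> ?thesis"
    then have big: "card X < m * card {x \<in> X. c x = j}" if "j < m" for j
      using that by auto
    have "X = (\<Union>j<m. {x \<in> X. c x = j})" using colours by auto
    also have "card \<dots> = (\<Sum>j<m. card {x \<in> X. c x = j})"
      using fin by (intro card_UN_disjoint) auto
    finally have "m * card X = (\<Sum>j<m. m * card {x \<in> X. c x = j})"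
      by (simp add: sum_distrib_left)
    also have "\<dots> > (\<Sum>j<m. card X)"
      using m big by (intro sum_strict_mono) auto
    finally show False by simp
  qed
  then show ?thesis using that by blast
qed

context
  fixes k v :: nat and V :: "'a set" and B :: "'a set set"
  assumes design: "steiner_2_design k v V B"
begin

lemma design_facts:
  shows "finite V" "card V = v" "2 < k" "k < v" "finite B"
    and "\<And>b. b \<in> B \<Longrightarrow> b \<subseteq> V" "\<And>b. b \<in> B \<Longrightarrow> card b = k" "\<And>b. b \<in> B \<Longrightarrow> finite b"
    and "\<And>x y. x \<in> V \<Longrightarrow> y \<in> V \<Longrightarrow> x \<noteq> y \<Longrightarrow> \<exists>!b. b \<in> B \<and> {x, y} \<subseteq> b"
proof -
  have "B \<subseteq> Pow V" and "finite V" using design unfolding steiner_2_design_def by blast+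
  then show "finite B" by (meson finite_Pow_iff finite_subset)
  show "\<And>b. b \<in> B \<Longrightarrow> finite b"
    using design unfolding steiner_2_design_def by (meson finite_subset)
qed (use design in \<open>auto simp: steiner_2_design_def\<close>)

(* Two points lie in at most one block: distinct blocks meet in at most one point. *)
lemma blocks_meet_at_most_once:
  assumes "b \<in> B" "b' \<in> B" "b \<noteq> b'"
  shows "card (b \<inter> b') \<le> 1"
proof (rule ccontr)
  assume "\<not> card (b \<inter> b') \<le> 1"
  then obtain x y where xy: "x \<in> b \<inter> b'" "y \<in> b \<inter> b'" "x \<noteq> y"
    using card_le_Suc0_iff_eq[of "b \<inter> b'"] assms(1) design_facts(8) by auto
  then have "x \<in> V" "y \<in> V" using assms design_facts(6) by auto
  with xy design_facts(9) show False using assms by blast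
qed

lemma common_point_unique:
  assumes "b \<in> B" "b' \<in> B" "b \<noteq> b'" "p \<in> b \<inter> b'" "q \<in> b \<inter> b'"
  shows "p = q"
  using blocks_meet_at_most_once[OF assms(1-3)] assms(1,4,5) design_facts(8)
  by (auto simp: card_le_Suc0_iff_eq)

lemma independent_blocks_disjoint:
  assumes "independent_set B one_BIG_adj I"
  shows "pairwise disjnt I"
proof (rule pairwiseI)
  fix b b' assume b: "b \<in> I" "b' \<in> I" "b \<noteq> b'"
  then have "b \<in> B" "b' \<in> B" "card (b \<inter> b') \<noteq> 1"
    using assms unfolding independent_set_def one_BIG_adj_def by auto
  with b(3) blocks_meet_at_most_once have "card (b \<inter> b') = 0" by fastforce
  then show "disjnt b b'" using \<open>b \<in> B\<close> design_facts(8) by (simp add: disjnt_def)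
qed

lemma closed_nbhd_meets:
  assumes "x \<in> B" "y \<in> closed_nbhd B one_BIG_adj x"
  shows "x \<inter> y \<noteq> {}"
proof (cases "y = x")
  case True
  then show ?thesis using assms design_facts(3,7) by fastforce
next
  case False
  then have "card (x \<inter> y) = 1"
    using assms(2) unfolding closed_nbhd_def nbhd_def one_BIG_adj_def by auto
  then show ?thesis by auto
qed

(* Replication number: the blocks through p, with p removed, partition V - {p}. *)
lemma replication_number:
  assumes "p \<in> V"
  shows "card {b \<in> B. p \<in> b} * (k - 1) = v - 1"
proof -
  let ?Bp = "{b \<in> B. p \<in> b}"
  have cover: "V - {p} = (\<Union>b\<in>?Bp. b - {p})"
  proof
    show "V - {p} \<subseteq> (\<Union>b\<in>?Bp. b - {p})"
    proof
      fix y assume y: "y \<in> V - {p}"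
      then obtain b where "b \<in> B" "{p, y} \<subseteq> b"
        using design_facts(9)[OF assms, of y] by auto
      then show "y \<in> (\<Union>b\<in>?Bp. b - {p})" using y by auto
    qed
  qed (use design_facts(6) in auto)
  have disj: "(b - {p}) \<inter> (b' - {p}) = {}" if "b \<in> ?Bp" "b' \<in> ?Bp" "b \<noteq> b'" for b b'
    using that common_point_unique[of b b' p] by blast
  have "v - 1 = card (V - {p})" using assms design_facts(1,2) by simp
  also have "\<dots> = (\<Sum>b\<in>?Bp. card (b - {p}))"
    unfolding cover using design_facts(5,8) disj by (intro card_UN_disjoint) auto
  also have "\<dots> = (\<Sum>b\<in>?Bp. k - 1)"
    using design_facts(7) by (intro sum.cong) auto
  finally show ?thesis by simp
qed

(* Double counting of (point, block) incidences: b k (k-1) = v (v-1). *)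
lemma number_of_blocks:
  shows "card B * (k * (k - 1)) = v * (v - 1)"
proof -
  have "card B * k = (\<Sum>b\<in>B. card {p \<in> V. p \<in> b})"
    using design_facts(6,7) by (simp add: Int_absorb1 flip: Int_def)
  also have "\<dots> = (\<Sum>p\<in>V. card {b \<in> B. p \<in> b})"
    using design_facts(5,1) by (rule double_counting)
  finally have "card B * k * (k - 1) = (\<Sum>p\<in>V. card {b \<in> B. p \<in> b} * (k - 1))"
    by (simp add: sum_distrib_right)
  also have "\<dots> = (\<Sum>p\<in>V. v - 1)" using replication_number by simp
  finally show ?thesis using design_facts(2) by (simp add: mult.assoc)
qed

(* Degree in the 1-BIG: the neighbours of b are the other blocks through the k points of b. *)
lemma one_BIG_degree:
  assumes "b \<in> B"
  shows "card (nbhd B one_BIG_adj b) * (k - 1) = k * (v - k)"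
proof -
  let ?P = "\<lambda>p. {b' \<in> B. p \<in> b'} - {b}"
  have nbhd_eq: "nbhd B one_BIG_adj b = (\<Union>p\<in>b. ?P p)"
  proof
    show "nbhd B one_BIG_adj b \<subseteq> (\<Union>p\<in>b. ?P p)"
      unfolding nbhd_def one_BIG_adj_def by (auto simp: card_1_singleton_iff)
    show "(\<Union>p\<in>b. ?P p) \<subseteq> nbhd B one_BIG_adj b"
    proof
      fix b' assume "b' \<in> (\<Union>p\<in>b. ?P p)"
      then obtain p where p: "p \<in> b \<inter> b'" "b' \<in> B" "b' \<noteq> b" by auto
      then have "card (b \<inter> b') \<noteq> 0" using assms design_facts(8) by auto
      with blocks_meet_at_most_once[OF assms p(2)] p show "b' \<in> nbhd B one_BIG_adj b"
        unfolding nbhd_def one_BIG_adj_def by auto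
    qed
  qed
  have disj: "?P p \<inter> ?P q = {}" if "p \<in> b" "q \<in> b" "p \<noteq> q" for p q
    using that common_point_unique[OF assms, of _ p q] by blast
  have "card (nbhd B one_BIG_adj b) = (\<Sum>p\<in>b. card (?P p))"
    unfolding nbhd_eq using assms design_facts(5,8) disj by (intro card_UN_disjoint) auto
  then have "card (nbhd B one_BIG_adj b) * (k - 1) = (\<Sum>p\<in>b. card (?P p) * (k - 1))"
    by (simp add: sum_distrib_right)
  also have "\<dots> = (\<Sum>p\<in>b. v - k)"
  proof (rule sum.cong)
    fix p assume p: "p \<in> b"
    then have "card (?P p) = card {b' \<in> B. p \<in> b'} - 1"
      using assms design_facts(5) by (simp add: card_Diff_singleton)
    then have "card (?P p) * (k - 1) = card {b' \<in> B. p \<in> b'} * (k - 1) - (k - 1)"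
      by (simp add: diff_mult_distrib)
    also have "\<dots> = (v - 1) - (k - 1)"
      using replication_number[of p] p design_facts(6)[OF assms] by auto
    also have "\<dots> = v - k" using design_facts(3) by simp
    finally show "card (?P p) * (k - 1) = v - k" .
  qed simp
  finally show ?thesis using design_facts(7)[OF assms] by simp
qed

(* The denominator of the theorem is k(k-1)(r+1) for the degree r of the 1-BIG. *)
lemma regular_degree_denominator:
  assumes "regular r B one_BIG_adj"
  shows "k^2 * v - k^3 + k^2 - k = k * (k - 1) * (r + 1)"
proof -
  have "1 < card V" using design_facts(2-4) by simp
  then obtain x y where "x \<in> V" "y \<in> V" "x \<noteq> y"
    using design_facts(1) card_le_Suc0_iff_eq[of V] by (auto simp: not_le)
  then obtain b where "b \<in> B" using design_facts(9) by blast
  then have r: "r * (k - 1) = k * (v - k)"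
    using assms one_BIG_degree unfolding regular_def by auto
  have "k^2 * v - k^3 + k^2 - k = k * (k * (v - k)) + k * (k - 1)"
    using design_facts(3,4)
    by (simp add: power2_eq_square power3_eq_cube diff_mult_distrib2 algebra_simps)
  also have "\<dots> = k * (k - 1) * (r + 1)"
    unfolding r[symmetric] by (simp add: algebra_simps)
  finally show ?thesis .
qed

end

theorem theorem4:
  fixes k v :: nat and V :: "'a set" and \<B> :: "'a set set"
  assumes "steiner_2_design k v V \<B>"
    and "independence_number \<B> one_BIG_adj >
           k * (v * (v - 1) div (k^2 * v - k^3 + k^2 - k))"
  shows "\<not> silver \<B> one_BIG_adj"
proof
  assume "silver \<B> one_BIG_adj"
  then obtain r I c where reg: "regular r \<B> one_BIG_adj" and alpha: "alpha_set \<B> one_BIG_adj I"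
    and proper: "proper_coloring (r + 1) \<B> one_BIG_adj c"
    and rainbow: "\<forall>x\<in>I. rainbow (r + 1) \<B> one_BIG_adj c x"
    unfolding silver_def by blast
  note D = design_facts[OF assms(1)] and denom = regular_degree_denominator[OF assms(1) reg]
  obtain j where j: "j < r + 1" and small: "(r + 1) * card {b \<in> \<B>. c b = j} \<le> card \<B>"
    using small_colour_class[of \<B> c "r + 1"] D(5) proper unfolding proper_coloring_def by auto
  let ?S = "{b \<in> \<B>. c b = j}"
  have I: "I \<subseteq> \<B>" "independent_set \<B> one_BIG_adj I"
    using alpha unfolding alpha_set_def independent_set_def by auto
  have meets: "x \<inter> \<Union>?S \<noteq> {}" if x: "x \<in> I" for x
  proof -
    have "{0..<r + 1} \<subseteq> c ` closed_nbhd \<B> one_BIG_adj x"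
      using rainbow x unfolding rainbow_def by blast
    then have "j \<in> c ` closed_nbhd \<B> one_BIG_adj x" using j by auto
    then obtain y where "y \<in> closed_nbhd \<B> one_BIG_adj x" "c y = j" by auto
    moreover then have "y \<in> \<B>" using x I unfolding closed_nbhd_def nbhd_def by auto
    ultimately show ?thesis
      using closed_nbhd_meets[OF assms(1)] x I by blast
  qed
  have I_bound: "card I \<le> k * card ?S"
    using D(5,7,8) independent_blocks_disjoint[OF assms(1) I(2)] meets
    by (intro disjoint_family_meeting_bound) auto
  have "card ?S * (k^2 * v - k^3 + k^2 - k) = (r + 1) * card ?S * (k * (k - 1))"
    unfolding denom by (simp add: algebra_simps)
  also have "\<dots> \<le> card \<B> * (k * (k - 1))" using small by (rule mult_right_mono) simp
  also have "\<dots> = v * (v - 1)" by (rule number_of_blocks[OF assms(1)])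
  finally have "card ?S \<le> v * (v - 1) div (k^2 * v - k^3 + k^2 - k)"
    using D(3) denom by (simp add: less_eq_div_iff_mult_less_eq)
  with I_bound have "card I \<le> k * (v * (v - 1) div (k^2 * v - k^3 + k^2 - k))"
    by (meson le_trans mult_le_mono2)
  then show False
    using assms(2) alpha unfolding alpha_set_def by simp
qed

end
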